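(* Let $q\in(0,1]$. Then $\omega(R(SO_q(3)))=q^{-4}$.
   Context: $R(SO_q(3))$ is the fusion algebra with irreducible objects $I=\mathbb{Z}_+$, unit $0$, trivial involution, product $m\cdot n=\sum_{k=|m-n|}^{m+n}k$, and dimension $d(n)=[2n+1]_q$, where $[x]_q=\frac{q^{-x}-q^x}{q^{-1}-q}$ for $0<q<1$ and $[x]_1=x$. For $A\subseteq I$, $|A|=\sum_{\beta\in A}d(\beta)^2$. A finite generating set is a finite $X\subseteq I$ such that every $\beta\in I$ has nonzero coefficient in some product $x_1\cdots x_n$, $x_i\in X$; $\ell_X(0)=0$, otherwise $\ell_X(\beta)$ is the least such $n\ge1$; $B_X(n)=\{\beta:\ell_X(\beta)\le n\}$; $\omega_X=\lim_n|B_X(n)|^{1/n}$ (exists) and $\omega=\inf_X\omega_X$ over finite generating sets. *)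

theory Defs
  imports Complex_Main
begin

text \<open>Fusion algebra R(SO_q(3)): irreducibles are naturals, unit 0,
  m * n = sum_{k=|m-n|}^{m+n} k (all coefficients 0 or 1).\<close>

definition qnum :: "real \<Rightarrow> real \<Rightarrow> real" where
  "qnum q x = (if q = 1 then x else (q powr (-x) - q powr x) / (q powr (-1) - q))"

definition dimq :: "real \<Rightarrow> nat \<Rightarrow> real" where
  "dimq q n = qnum q (real (2 * n + 1))"

definition fus :: "nat \<Rightarrow> nat \<Rightarrow> nat set" where
  "fus m n = {k. (if m \<le> n then n - m else m - n) \<le> k \<and> k \<le> m + n}"

text \<open>Support (set of irreducibles with nonzero coefficient) of the product
  x1 * ... * xn; coefficients are nonnegative, so no cancellation occurs.\<close>
fun prod_supp :: "nat list \<Rightarrow> nat set" where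
  "prod_supp [] = {0}"
| "prod_supp (x # xs) = (\<Union>k\<in>prod_supp xs. fus x k)"

definition generating :: "nat set \<Rightarrow> bool" where
  "generating X \<longleftrightarrow> finite X \<and>
     (\<forall>\<beta>::nat. \<exists>xs. xs \<noteq> [] \<and> set xs \<subseteq> X \<and> \<beta> \<in> prod_supp xs)"

definition word_len :: "nat set \<Rightarrow> nat \<Rightarrow> nat" where
  "word_len X \<beta> = (if \<beta> = 0 then 0 else
     (LEAST n. 1 \<le> n \<and> (\<exists>xs. length xs = n \<and> set xs \<subseteq> X \<and> \<beta> \<in> prod_supp xs)))"

definition ball_X :: "nat set \<Rightarrow> nat \<Rightarrow> nat set" where
  "ball_X X n = {\<beta>. word_len X \<beta> \<le> n}"

definition size_q :: "real \<Rightarrow> nat set \<Rightarrow> real" where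
  "size_q q A = (\<Sum>\<beta>\<in>A. (dimq q \<beta>)^2)"

definition omega_X :: "real \<Rightarrow> nat set \<Rightarrow> real" where
  "omega_X q X = lim (\<lambda>n. size_q q (ball_X X n) powr (1 / real n))"

definition omega :: "real \<Rightarrow> real" where
  "omega q = (INF X\<in>{X. generating X}. omega_X q X)"

end

theory Submission
  imports Defs
begin

text \<open>A product of n generators is supported on {..n * Max X}, and the n-th power of Max X
  contains n * Max X, so the ball B_X(n) lies between these two sets. Since
  d(k) = [2k+1]_q is q^(-2k) up to a factor between 1 and 2k+1, the size of B_X(n) is
  q^(-4 n Max X) up to a polynomial factor in n. Hence omega_X = q^(-4 Max X), which is
  smallest for X = {1}.\<close>

lemma fus_le_add: "k \<in> fus m n \<Longrightarrow> k \<le> m + n"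
  by (simp add: fus_def)

lemma add_in_fus: "m + n \<in> fus m n"
  by (auto simp: fus_def)

lemma prod_supp_subset_atMost:
  assumes "finite X" "set xs \<subseteq> X"
  shows "prod_supp xs \<subseteq> {..length xs * Max X}"
  using assms(2)
proof (induction xs)
  case Nil
  then show ?case by simp
next
  case (Cons x xs)
  have "x \<le> Max X" using Cons.prems assms(1) by simp
  with Cons show ?case by (force dest: fus_le_add)
qed

lemma mult_in_prod_supp_replicate: "n * m \<in> prod_supp (replicate n m)"
proof (induction n)
  case 0
  then show ?case by simp
next
  case (Suc n)
  then show ?case using add_in_fus[of m "n * m"] by auto
qed

lemma word_len_le:
  assumes "xs \<noteq> []" "set xs \<subseteq> X" "\<beta> \<in> prod_supp xs"
  shows "word_len X \<beta> \<le> length xs"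
  unfolding word_len_def using assms
  by (auto intro!: Least_le exI[of _ xs] simp: Suc_le_eq)

lemma word_len_witness:
  assumes "generating X"
  obtains xs where "length xs = word_len X \<beta>" "set xs \<subseteq> X" "\<beta> \<in> prod_supp xs"
proof (cases "\<beta> = 0")
  case True
  then show ?thesis using that[of "[]"] by (simp add: word_len_def)
next
  case False
  let ?P = "\<lambda>n. 1 \<le> n \<and> (\<exists>xs. length xs = n \<and> set xs \<subseteq> X \<and> \<beta> \<in> prod_supp xs)"
  obtain xs where "xs \<noteq> []" "set xs \<subseteq> X" "\<beta> \<in> prod_supp xs"
    using assms unfolding generating_def by blast
  then have "?P (length xs)" by (auto simp: Suc_le_eq)
  then have "?P (LEAST n. ?P n)" by (rule LeastI)
  then have "?P (word_len X \<beta>)" using False by (simp add: word_len_def)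
  then show ?thesis using that by blast
qed

lemma generating_Max:
  assumes "generating X"
  shows "Max X \<in> X" "1 \<le> Max X"
proof -
  have fin: "finite X" using assms by (simp add: generating_def)
  obtain xs where xs: "xs \<noteq> []" "set xs \<subseteq> X" "1 \<in> prod_supp xs"
    using assms unfolding generating_def by blast
  then have "X \<noteq> {}" by (cases xs) auto
  then show "Max X \<in> X" using fin by simp
  have "1 \<le> length xs * Max X" using prod_supp_subset_atMost[OF fin xs(2)] xs(3) by auto
  then show "1 \<le> Max X" by (cases "Max X") auto
qed

lemma ball_X_subset_atMost:
  assumes "generating X"
  shows "ball_X X n \<subseteq> {..n * Max X}"
proof
  fix \<beta> assume "\<beta> \<in> ball_X X n"
  then have len: "word_len X \<beta> \<le> n" by (simp add: ball_X_def)
  obtain xs where xs: "length xs = word_len X \<beta>" "set xs \<subseteq> X" "\<beta> \<in> prod_supp xs"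
    using word_len_witness[OF assms] .
  have "finite X" using assms by (simp add: generating_def)
  then have "\<beta> \<le> length xs * Max X" using prod_supp_subset_atMost xs(2,3) by blast
  also have "\<dots> \<le> n * Max X" using xs(1) len by simp
  finally show "\<beta> \<in> {..n * Max X}" by simp
qed

lemma mult_Max_in_ball_X:
  assumes "generating X"
  shows "n * Max X \<in> ball_X X n"
proof (cases "n = 0")
  case True
  then show ?thesis by (simp add: ball_X_def word_len_def)
next
  case False
  then have "word_len X (n * Max X) \<le> length (replicate n (Max X))"
    using generating_Max(1)[OF assms]
    by (intro word_len_le mult_in_prod_supp_replicate) auto
  then show ?thesis by (simp add: ball_X_def)
qed

lemma generating_singleton_one: "generating {1}"
  unfolding generating_def
proof (intro conjI allI)
  fix \<beta> :: nat
  show "\<exists>xs. xs \<noteq> [] \<and> set xs \<subseteq> {1} \<and> \<beta> \<in> prod_supp xs"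
  proof (cases "\<beta> = 0")
    case True
    have "0 \<in> prod_supp [1, 1]" by (auto simp: fus_def)
    then show ?thesis using True by (intro exI[of _ "[1, 1]"]) auto
  next
    case False
    then show ?thesis
      using mult_in_prod_supp_replicate[of \<beta> 1] by (intro exI[of _ "replicate \<beta> 1"]) auto
  qed
qed simp

lemma dimq_eq_geometric_sum:
  assumes "0 < q" "q \<le> 1"
  shows "dimq q k = (\<Sum>i<2*k+1. (q^2)^i) / q^(2*k)"
proof (cases "q = 1")
  case True
  then show ?thesis by (simp add: dimq_def qnum_def)
next
  case False
  define a where "a = q^(2*k)"
  have "a > 0" using assms(1) by (simp add: a_def)
  have "q^2 \<noteq> 1" using assms False by (simp add: power_less_one_iff less_imp_neq)
  have "q powr real (2*k+1) = a*q"
    unfolding powr_realpow[OF assms(1)] a_def by simp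
  then have "q powr (- real (2*k+1)) = 1 / (a*q)"
    by (simp only: powr_minus inverse_eq_divide)
  then have "dimq q k = (1 / (a*q) - a*q) / (1/q - q)"
    using False \<open>q powr real (2*k+1) = a*q\<close>
    by (simp only: dimq_def qnum_def if_False powr_neg_one[OF assms(1)])
  also have "\<dots> = (1 - a*a*q*q) / (1 - q^2) / a"
    using \<open>a > 0\<close> assms(1) \<open>q^2 \<noteq> 1\<close> by (simp add: field_simps power2_eq_square)
  also have "1 - a*a*q*q = 1 - (q^2)^(2*k+1)"
    by (simp add: a_def power2_eq_square power_mult_distrib flip: power_mult)
  also have "(1 - (q^2)^(2*k+1)) / (1 - q^2) = (\<Sum>i<2*k+1. (q^2)^i)"
    unfolding sum_gp_strict using \<open>q^2 \<noteq> 1\<close> by simp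
  finally show ?thesis by (simp add: a_def)
qed

lemma dimq_bounds:
  assumes "0 < q" "q \<le> 1"
  shows "(1/q)^(2*k) \<le> dimq q k" "dimq q k \<le> real (2*k+1) * (1/q)^(2*k)"
proof -
  let ?s = "\<Sum>i<2*k+1. (q^2)^i"
  have "(q^2)^0 \<le> ?s" by (rule member_le_sum) (use assms in auto)
  then have "1 \<le> ?s" by simp
  moreover have "?s \<le> real (2*k+1)"
    using sum_bounded_above[of "{..<2*k+1}" "\<lambda>i. (q^2)^i" 1] assms by (simp add: power_le_one)
  ultimately show "(1/q)^(2*k) \<le> dimq q k" "dimq q k \<le> real (2*k+1) * (1/q)^(2*k)"
    unfolding dimq_eq_geometric_sum[OF assms] using assms
    by (simp_all add: divide_right_mono power_one_over)
qed

lemma dimq_sq_bounds: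
  assumes "0 < q" "q \<le> 1"
  shows "(1/q)^(4*k) \<le> (dimq q k)^2" "(dimq q k)^2 \<le> real (2*k+1)^2 * (1/q)^(4*k)"
proof -
  have sq: "((1/q)^(2*k))^2 = (1/q)^(4*k)" by (simp flip: power_mult)
  have nonneg: "0 \<le> (1/q)^(2*k)" using assms by simp
  show "(1/q)^(4*k) \<le> (dimq q k)^2"
    using power_mono[OF dimq_bounds(1)[OF assms] nonneg, of 2] sq by simp
  have "(dimq q k)^2 \<le> (real (2*k+1) * (1/q)^(2*k))^2"
    using nonneg dimq_bounds[OF assms, of k] by (intro power_mono) linarith+
  then show "(dimq q k)^2 \<le> real (2*k+1)^2 * (1/q)^(4*k)"
    using sq by (simp add: power_mult_distrib)
qed

lemma size_q_bounds:
  assumes "0 < q" "q \<le> 1" and "N \<in> A" "A \<subseteq> {..N}"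
  shows "(1/q)^(4*N) \<le> size_q q A"
    "size_q q A \<le> real (N+1) * real (2*N+1)^2 * (1/q)^(4*N)"
proof -
  have "finite A" using assms(4) finite_subset by blast
  then have "(dimq q N)^2 \<le> size_q q A"
    unfolding size_q_def using assms(3) by (intro member_le_sum) auto
  then show "(1/q)^(4*N) \<le> size_q q A" using dimq_sq_bounds(1)[OF assms(1,2), of N] by linarith
  have term_bound: "(dimq q k)^2 \<le> real (2*N+1)^2 * (1/q)^(4*N)" if "k \<le> N" for k
  proof -
    have "(dimq q k)^2 \<le> real (2*k+1)^2 * (1/q)^(4*k)" by (rule dimq_sq_bounds(2)[OF assms(1,2)])
    also have "\<dots> \<le> real (2*N+1)^2 * (1/q)^(4*N)"
      using that assms(1,2) by (intro mult_mono power_mono power_increasing) auto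
    finally show ?thesis .
  qed
  have "size_q q A \<le> (\<Sum>k\<le>N. (dimq q k)^2)"
    unfolding size_q_def using assms(4) by (intro sum_mono2) auto
  also have "\<dots> \<le> real (card {..N}) * (real (2*N+1)^2 * (1/q)^(4*N))"
    using term_bound by (intro sum_bounded_above) auto
  finally show "size_q q A \<le> real (N+1) * real (2*N+1)^2 * (1/q)^(4*N)" by simp
qed

lemma root_tendsto_of_exponential_bounds:
  fixes S :: "nat \<Rightarrow> real"
  assumes "0 < c" "0 < K"
    and lower: "\<And>n. 1 \<le> n \<Longrightarrow> c^n \<le> S n"
    and upper: "\<And>n. 1 \<le> n \<Longrightarrow> S n \<le> K * real n ^ d * c^n"
  shows "(\<lambda>n. S n powr (1 / real n)) \<longlonglongrightarrow> c"
proof -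
  let ?u = "\<lambda>n. root n K * root n (real n) ^ d * c"
  have root_bounds: "c \<le> root n (S n) \<and> root n (S n) \<le> ?u n" if "1 \<le> n" for n
  proof
    have n: "0 < n" using that by simp
    have "c = root n (c^n)" using n assms(1) by (simp only: real_root_pos2 less_imp_le)
    also have "\<dots> \<le> root n (S n)" using lower[OF that] by (simp only: real_root_le_iff[OF n])
    finally show "c \<le> root n (S n)" .
    have "root n (S n) \<le> root n (K * real n ^ d * c^n)"
      using upper[OF that] by (simp only: real_root_le_iff[OF n])
    also have "\<dots> = ?u n"
      unfolding real_root_mult real_root_pos2[OF n less_imp_le[OF assms(1)]]
      by (simp only: real_root_power[OF n])
    finally show "root n (S n) \<le> ?u n" .
  qed
  have "?u \<longlonglongrightarrow> 1 * 1 ^ d * c"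
    by (intro tendsto_intros LIMSEQ_root_const LIMSEQ_root assms)
  then have lim_u: "?u \<longlonglongrightarrow> c" by simp
  have "\<forall>\<^sub>F n in sequentially. c \<le> root n (S n)"
    using eventually_ge_at_top[of 1] by eventually_elim (use root_bounds in blast)
  moreover have "\<forall>\<^sub>F n in sequentially. root n (S n) \<le> ?u n"
    using eventually_ge_at_top[of 1] by eventually_elim (use root_bounds in blast)
  ultimately have root_lim: "(\<lambda>n. root n (S n)) \<longlonglongrightarrow> c"
    using tendsto_const lim_u by (rule tendsto_sandwich)
  have root_eq_powr: "\<forall>\<^sub>F n in sequentially. root n (S n) = S n powr (1 / real n)"
    using eventually_ge_at_top[of 1]
  proof eventually_elim
    case (elim n)
    have "0 \<le> S n" using lower[OF elim] assms(1) by (meson order.trans zero_le_power less_imp_le)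
    then show ?case using elim by (simp add: root_powr_inverse)
  qed
  with root_lim show ?thesis by (simp add: tendsto_cong)
qed

lemma omega_X_eq:
  assumes "0 < q" "q \<le> 1" and gen: "generating X"
  shows "omega_X q X = (1/q)^(4 * Max X)"
proof -
  define M where "M = Max X"
  define c where "c = (1/q)^(4*M)"
  have "1 \<le> M" using generating_Max(2)[OF gen] by (simp add: M_def)
  have c_pow: "c^n = (1/q)^(4*(n*M))" for n
    by (simp add: c_def ac_simps flip: power_mult)
  have ball_bounds: "n*M \<in> ball_X X n" "ball_X X n \<subseteq> {..n*M}" for n
    unfolding M_def using mult_Max_in_ball_X ball_X_subset_atMost gen by auto
  have "(\<lambda>n. size_q q (ball_X X n) powr (1 / real n)) \<longlonglongrightarrow> c"
  proof (rule root_tendsto_of_exponential_bounds)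
    show "0 < c" using assms(1) by (simp add: c_def)
    show "0 < 18 * real M ^ 3" using \<open>1 \<le> M\<close> by simp
    show "c^n \<le> size_q q (ball_X X n)" for n
      unfolding c_pow using size_q_bounds(1)[OF assms(1,2) ball_bounds] .
    show "size_q q (ball_X X n) \<le> 18 * real M ^ 3 * real n ^ 3 * c^n" if "1 \<le> n" for n
    proof -
      define N where "N = real (n*M)"
      have "1 \<le> n * M" using that \<open>1 \<le> M\<close> by simp
      then have "1 \<le> N" unfolding N_def by (metis of_nat_1 of_nat_le_iff)
      have "(N + 1) * (2*N + 1)^2 \<le> (2*N) * (3*N)^2"
        using \<open>1 \<le> N\<close> by (intro mult_mono power_mono) auto
      then have poly: "real (n*M+1) * real (2*(n*M)+1)^2 \<le> 18 * real M ^ 3 * real n ^ 3"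
        by (simp add: N_def power_mult_distrib algebra_simps power2_eq_square power3_eq_cube)
      have "size_q q (ball_X X n) \<le> real (n*M+1) * real (2*(n*M)+1)^2 * c^n"
        unfolding c_pow using size_q_bounds(2)[OF assms(1,2) ball_bounds] .
      also have "\<dots> \<le> 18 * real M ^ 3 * real n ^ 3 * c^n"
        using poly assms(1) by (intro mult_right_mono) (simp_all add: c_def)
      finally show ?thesis .
    qed
  qed
  then show ?thesis unfolding omega_X_def c_def M_def by (rule limI)
qed

theorem proposition5p4:
  fixes q :: real
  assumes "0 < q" and "q \<le> 1"
  shows "omega q = q powr (-4)"
proof -
  have minimal: "(1/q)^4 \<le> omega_X q X" if "generating X" for X
  proof -
    have "(1/q)^4 \<le> (1/q)^(4 * Max X)"
      using generating_Max(2)[OF that] assms by (intro power_increasing) auto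
    then show ?thesis using omega_X_eq[OF assms that] by simp
  qed
  have "omega_X q {1} = (1/q)^4"
    using omega_X_eq[OF assms generating_singleton_one] by simp
  then have "omega q = (1/q)^4"
    unfolding omega_def using generating_singleton_one minimal
    by (intro cInf_eq_minimum) force+
  also have "\<dots> = q powr (-4)"
    using assms(1) by (simp add: powr_minus_divide powr_numeral power_one_over)
  finally show ?thesis .
qed

end
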